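(* For every BI formula $\varphi$, $\varphi\in[\![\varphi]\!]\subseteq[\![\varphi]\!]^{\mathrm{out}}$, where $[\![\varphi]\!]$ is the interpretation of $\varphi$ in the BI algebra $\mathcal C$ with atoms interpreted by $[\![a]\!]=[\![a]\!]^{\mathrm{out}}$, and the leftmost $\varphi$ denotes the single-leaf bunch.
   Context: Formulas of BI: $\varphi,\psi ::= \top \mid \bot \mid \varphi\wedge\psi \mid \varphi\vee\psi \mid \varphi\to\psi \mid \mathsf{emp} \mid \varphi\ast\psi \mid \varphi -\!\!\ast\, \psi \mid a$, $a\in\mathrm{Atom}$. Bunches are finite binary trees whose leaves are formulas or empty bunches $\varnothing_m,\varnothing_a$ and whose internal nodes are labelled by the multiplicative comma ($\Delta_1\mathbin{,}\Delta_2$) or the additive semicolon ($\Delta_1\mathbin{;}\Delta_2$). A bunched context $\Delta(-)$ is a bunch with one leaf replaced by a hole; $\Delta(\Gamma)$ fills it with $\Gamma$. Bunch equivalence $\equiv$ is the least equivalence relation making $\mathbin{,}$ commutative, associative with unit $\varnothing_m$, $\mathbin{;}$ commutative, associative with unit $\varnothing_a$, and closed under contexts; $\mathrm{Bunch}$ is the set of bunches modulo $\equiv$. The cut-free BI sequent calculus ($\Delta\vdash_{\mathsf{cf}}\varphi$) has the rules: (ax) $a\vdash a$ for atoms $a$; (equiv) from $\Delta'\vdash\varphi$, $\Delta\equiv\Delta'$ infer $\Delta\vdash\varphi$; (W;) from $\Delta(\Delta_1)\vdash\varphi$ infer $\Delta(\Delta_1\mathbin{;}\Delta_2)\vdash\varphi$;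 (C;) from $\Delta(\Delta_1\mathbin{;}\Delta_1)\vdash\varphi$ infer $\Delta(\Delta_1)\vdash\varphi$; (empR) $\varnothing_m\vdash\mathsf{emp}$; (empL) from $\Delta(\varnothing_m)\vdash\varphi$ infer $\Delta(\mathsf{emp})\vdash\varphi$; ($\ast$R) from $\Delta_1\vdash\varphi$, $\Delta_2\vdash\psi$ infer $\Delta_1\mathbin{,}\Delta_2\vdash\varphi\ast\psi$; ($\ast$L) from $\Delta(\varphi\mathbin{,}\psi)\vdash\chi$ infer $\Delta(\varphi\ast\psi)\vdash\chi$; ($-\!\ast$R) from $\Delta\mathbin{,}\varphi\vdash\psi$ infer $\Delta\vdash\varphi-\!\!\ast\,\psi$; ($-\!\ast$L) from $\Delta_1\vdash\varphi$, $\Delta(\Delta_2\mathbin{,}\psi)\vdash\chi$ infer $\Delta((\Delta_1\mathbin{,}\Delta_2)\mathbin{,}(\varphi-\!\!\ast\,\psi))\vdash\chi$; ($\top$R) $\varnothing_a\vdash\top$; ($\top$L) from $\Delta(\varnothing_a)\vdash\varphi$ infer $\Delta(\top)\vdash\varphi$; ($\wedge$R) from $\Delta_1\vdash\varphi$, $\Delta_2\vdash\psi$ infer $\Delta_1\mathbin{;}\Delta_2\vdash\varphi\wedge\psi$; ($\wedge$L) from $\Delta(\varphi\mathbin{;}\psi)\vdash\chi$ infer $\Delta(\varphi\wedge\psi)\vdash\chi$; ($\to$R) from $\Delta\mathbin{;}\varphi\vdash\psi$ infer $\Delta\vdash\varphi\to\psi$; ($\to$L) from $\Delta_1\vdash\varphi$,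 $\Delta(\Delta_2\mathbin{;}\psi)\vdash\chi$ infer $\Delta((\Delta_1\mathbin{;}\Delta_2)\mathbin{;}(\varphi\to\psi))\vdash\chi$; ($\bot$L) $\Delta(\bot)\vdash\varphi$; ($\vee$R1/2) from $\Delta\vdash\varphi$ (resp. $\Delta\vdash\psi$) infer $\Delta\vdash\varphi\vee\psi$; ($\vee$L) from $\Delta(\varphi)\vdash\chi$, $\Delta(\psi)\vdash\chi$ infer $\Delta(\varphi\vee\psi)\vdash\chi$. (No cut rule.) For a formula $\varphi$, $[\![\varphi]\!]^{\mathrm{out}}=\{\Delta\in\mathrm{Bunch}\mid\Delta\vdash_{\mathsf{cf}}\varphi\}$. For $X\subseteq\mathrm{Bunch}$, $\mathrm{cl}(X)=\bigcap\{[\![\varphi]\!]^{\mathrm{out}}\mid X\subseteq[\![\varphi]\!]^{\mathrm{out}}\}$, and $\mathcal C=\{X\subseteq\mathrm{Bunch}\mid X=\mathrm{cl}(X)\}$. $\mathcal C$ is a BI algebra (bounded Heyting algebra with a residuated commutative monoid $(\ast,\mathsf{emp},-\!\!\ast)$) with operations: $\mathsf{emp}=\mathrm{cl}(\{\varnothing_m\})$, $\top=\mathrm{Bunch}$, $\bot=\mathrm{cl}(\emptyset)$, $X\vee Y=\mathrm{cl}(X\cup Y)$, $X\wedge Y=X\cap Y$, $X\ast Y=\mathrm{cl}(\{\Delta\mathbin{,}\Delta'\mid\Delta\in X,\Delta'\in Y\})$, $X-\!\!\ast\,Y=\{\Delta\mid\forall\Delta'\in X.\ (\Delta\mathbin{,}\Delta')\in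 Y\}$, $X\to Y=\{\Delta\mid\forall\Delta'\in X.\ (\Delta\mathbin{;}\Delta')\in Y\}$. Formulas are interpreted homomorphically in $\mathcal C$ (each connective by the corresponding operation) given the interpretation of atoms. *)

theory Defs
  imports Main
begin

datatype 'a form =
    FTop | FBot | FAnd "'a form" "'a form" | FOr "'a form" "'a form"
  | FImp "'a form" "'a form" | FEmp | FStar "'a form" "'a form"
  | FWand "'a form" "'a form" | FAtom 'a

datatype 'a rbunch =
    Leaf "'a form"
  | EmpM          \<comment> \<open>multiplicative empty bunch\<close>
  | EmpA          \<comment> \<open>additive empty bunch\<close>
  | Comma "'a rbunch" "'a rbunch"
  | Semi "'a rbunch" "'a rbunch"

datatype 'a ctx =
    Hole
  | CommaL "'a ctx" "'a rbunch" | CommaR "'a rbunch" "'a ctx"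
  | SemiL "'a ctx" "'a rbunch" | SemiR "'a rbunch" "'a ctx"

primrec fill :: "'a ctx \<Rightarrow> 'a rbunch \<Rightarrow> 'a rbunch" where
  "fill Hole G = G"
| "fill (CommaL C B) G = Comma (fill C G) B"
| "fill (CommaR B C) G = Comma B (fill C G)"
| "fill (SemiL C B) G = Semi (fill C G) B"
| "fill (SemiR B C) G = Semi B (fill C G)"

inductive bequiv :: "'a rbunch \<Rightarrow> 'a rbunch \<Rightarrow> bool" where
  refl: "bequiv D D"
| sym: "bequiv D D' \<Longrightarrow> bequiv D' D"
| trans: "bequiv D1 D2 \<Longrightarrow> bequiv D2 D3 \<Longrightarrow> bequiv D1 D3"
| comma_comm: "bequiv (Comma D1 D2) (Comma D2 D1)"
| comma_assoc: "bequiv (Comma (Comma D1 D2) D3) (Comma D1 (Comma D2 D3))"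
| comma_unit: "bequiv (Comma EmpM D) D"
| semi_comm: "bequiv (Semi D1 D2) (Semi D2 D1)"
| semi_assoc: "bequiv (Semi (Semi D1 D2) D3) (Semi D1 (Semi D2 D3))"
| semi_unit: "bequiv (Semi EmpA D) D"
| comma_cong: "bequiv D1 D1' \<Longrightarrow> bequiv D2 D2' \<Longrightarrow> bequiv (Comma D1 D2) (Comma D1' D2')"
| semi_cong: "bequiv D1 D1' \<Longrightarrow> bequiv D2 D2' \<Longrightarrow> bequiv (Semi D1 D2) (Semi D1' D2')"

lemma equivp_bequiv: "equivp bequiv"
  by (rule equivpI) (auto intro: reflpI sympI transpI bequiv.intros)

quotient_type 'a bunch = "'a rbunch" / bequiv
  by (rule equivp_bequiv)

inductive cf :: "'a rbunch \<Rightarrow> 'a form \<Rightarrow> bool" where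
  ax: "cf (Leaf (FAtom a)) (FAtom a)"
| equiv: "cf D' \<phi> \<Longrightarrow> bequiv D D' \<Longrightarrow> cf D \<phi>"
| WSemi: "cf (fill C D1) \<phi> \<Longrightarrow> cf (fill C (Semi D1 D2)) \<phi>"
| CSemi: "cf (fill C (Semi D1 D1)) \<phi> \<Longrightarrow> cf (fill C D1) \<phi>"
| empR: "cf EmpM FEmp"
| empL: "cf (fill C EmpM) \<phi> \<Longrightarrow> cf (fill C (Leaf FEmp)) \<phi>"
| starR: "cf D1 \<phi> \<Longrightarrow> cf D2 \<psi> \<Longrightarrow> cf (Comma D1 D2) (FStar \<phi> \<psi>)"
| starL: "cf (fill C (Comma (Leaf \<phi>) (Leaf \<psi>))) \<chi> \<Longrightarrow> cf (fill C (Leaf (FStar \<phi> \<psi>))) \<chi>"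
| wandR: "cf (Comma D (Leaf \<phi>)) \<psi> \<Longrightarrow> cf D (FWand \<phi> \<psi>)"
| wandL: "cf D1 \<phi> \<Longrightarrow> cf (fill C (Comma D2 (Leaf \<psi>))) \<chi> \<Longrightarrow>
          cf (fill C (Comma (Comma D1 D2) (Leaf (FWand \<phi> \<psi>)))) \<chi>"
| topR: "cf EmpA FTop"
| topL: "cf (fill C EmpA) \<phi> \<Longrightarrow> cf (fill C (Leaf FTop)) \<phi>"
| andR: "cf D1 \<phi> \<Longrightarrow> cf D2 \<psi> \<Longrightarrow> cf (Semi D1 D2) (FAnd \<phi> \<psi>)"
| andL: "cf (fill C (Semi (Leaf \<phi>) (Leaf \<psi>))) \<chi> \<Longrightarrow> cf (fill C (Leaf (FAnd \<phi> \<psi>))) \<chi>"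
| impR: "cf (Semi D (Leaf \<phi>)) \<psi> \<Longrightarrow> cf D (FImp \<phi> \<psi>)"
| impL: "cf D1 \<phi> \<Longrightarrow> cf (fill C (Semi D2 (Leaf \<psi>))) \<chi> \<Longrightarrow>
          cf (fill C (Semi (Semi D1 D2) (Leaf (FImp \<phi> \<psi>)))) \<chi>"
| botL: "cf (fill C (Leaf FBot)) \<phi>"
| orR1: "cf D \<phi> \<Longrightarrow> cf D (FOr \<phi> \<psi>)"
| orR2: "cf D \<psi> \<Longrightarrow> cf D (FOr \<phi> \<psi>)"
| orL: "cf (fill C (Leaf \<phi>)) \<chi> \<Longrightarrow> cf (fill C (Leaf \<psi>)) \<chi> \<Longrightarrow> cf (fill C (Leaf (FOr \<phi> \<psi>))) \<chi>"

lift_definition bleaf :: "'a form \<Rightarrow> 'a bunch" is Leaf .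
lift_definition bempm :: "'a bunch" is EmpM .
lift_definition bcomma :: "'a bunch \<Rightarrow> 'a bunch \<Rightarrow> 'a bunch" is Comma
  by (rule bequiv.comma_cong)
lift_definition bsemi :: "'a bunch \<Rightarrow> 'a bunch \<Rightarrow> 'a bunch" is Semi
  by (rule bequiv.semi_cong)

text \<open>[[phi]]^out = set of bunches (mod equivalence) cf-deriving phi.\<close>
definition out :: "'a form \<Rightarrow> 'a bunch set" where
  "out \<phi> = {abs_bunch D | D. cf D \<phi>}"

definition cl :: "'a bunch set \<Rightarrow> 'a bunch set" where
  "cl X = \<Inter> {out \<phi> | \<phi>. X \<subseteq> out \<phi>}"

definition C_emp :: "'a bunch set" where "C_emp = cl {bempm}"
definition C_top :: "'a bunch set" where "C_top = UNIV"
definition C_bot :: "'a bunch set" where "C_bot = cl {}"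
definition C_or :: "'a bunch set \<Rightarrow> 'a bunch set \<Rightarrow> 'a bunch set" where
  "C_or X Y = cl (X \<union> Y)"
definition C_and :: "'a bunch set \<Rightarrow> 'a bunch set \<Rightarrow> 'a bunch set" where
  "C_and X Y = X \<inter> Y"
definition C_star :: "'a bunch set \<Rightarrow> 'a bunch set \<Rightarrow> 'a bunch set" where
  "C_star X Y = cl {bcomma D D' | D D'. D \<in> X \<and> D' \<in> Y}"
definition C_wand :: "'a bunch set \<Rightarrow> 'a bunch set \<Rightarrow> 'a bunch set" where
  "C_wand X Y = {D. \<forall>D'\<in>X. bcomma D D' \<in> Y}"
definition C_imp :: "'a bunch set \<Rightarrow> 'a bunch set \<Rightarrow> 'a bunch set" where
  "C_imp X Y = {D. \<forall>D'\<in>X. bsemi D D' \<in> Y}"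

primrec interp :: "'a form \<Rightarrow> 'a bunch set" where
  "interp FTop = C_top"
| "interp FBot = C_bot"
| "interp (FAnd \<phi> \<psi>) = C_and (interp \<phi>) (interp \<psi>)"
| "interp (FOr \<phi> \<psi>) = C_or (interp \<phi>) (interp \<psi>)"
| "interp (FImp \<phi> \<psi>) = C_imp (interp \<phi>) (interp \<psi>)"
| "interp FEmp = C_emp"
| "interp (FStar \<phi> \<psi>) = C_star (interp \<phi>) (interp \<psi>)"
| "interp (FWand \<phi> \<psi>) = C_wand (interp \<phi>) (interp \<psi>)"
| "interp (FAtom a) = out (FAtom a)"

end

theory Submission
  imports Defs
begin

text \<open>By simultaneous induction on \<open>\<phi>\<close>, the inclusion \<open>interp \<phi> \<subseteq> out \<phi>\<close> follows
  from the right rules and the membership \<open>bleaf \<phi> \<in> interp \<phi>\<close> from the left rules of the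
  cut-free calculus. For conjunction and the two implications the left rules do not give the
  membership directly: they only place a bunch built from the leaf \<open>\<phi>\<close> below the leaf of a
  subformula in the contextual order, where \<open>D\<close> is below \<open>D'\<close> if replacing \<open>D'\<close> by \<open>D\<close> in
  any context preserves cut-free derivability. The induction therefore also carries the
  invariant that every interpretation is downward closed for this order: the sets \<open>out \<chi>\<close>,
  hence all closed sets, are, and intersection and both implications preserve it.\<close>

lemma abs_bunch_eq_iff: "abs_bunch D = abs_bunch D' \<longleftrightarrow> bequiv D D'"
  using Quotient3_rel[OF Quotient3_bunch, of D D'] by (auto intro: bequiv.refl)

lemma bunch_abs_cases: obtains D where "x = abs_bunch D"
  using Quotient3_abs_rep[OF Quotient3_bunch, of x] by metis

lemma abs_bunch_in_out_iff: "abs_bunch D \<in> out \<phi> \<longleftrightarrow> cf D \<phi>"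
  unfolding out_def by (auto simp: abs_bunch_eq_iff intro: cf.equiv bequiv.refl)

lemma subset_out_iff: "X \<subseteq> out \<phi> \<longleftrightarrow> (\<forall>D. abs_bunch D \<in> X \<longrightarrow> cf D \<phi>)"
  by (metis abs_bunch_in_out_iff bunch_abs_cases subset_iff)

lemma in_cl_iff: "x \<in> cl X \<longleftrightarrow> (\<forall>\<phi>. X \<subseteq> out \<phi> \<longrightarrow> x \<in> out \<phi>)"
  unfolding cl_def by blast

lemma bleaf_in_cl_iff: "bleaf \<phi> \<in> cl X \<longleftrightarrow> (\<forall>\<chi>. X \<subseteq> out \<chi> \<longrightarrow> cf (Leaf \<phi>) \<chi>)"
  by (simp add: in_cl_iff bleaf.abs_eq abs_bunch_in_out_iff)

lemma cl_subset_out: "X \<subseteq> out \<phi> \<Longrightarrow> cl X \<subseteq> out \<phi>"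
  unfolding cl_def by blast

lemma bequiv_fill: "bequiv D D' \<Longrightarrow> bequiv (fill C D) (fill C D')"
  by (induction C) (auto intro: bequiv.intros)

lemma bequiv_Semi_EmpA: "bequiv (Semi D EmpA) D"
  using bequiv.semi_comm bequiv.semi_unit by (rule bequiv.trans)

lemma bequiv_Comma_EmpM: "bequiv (Comma D EmpM) D"
  using bequiv.comma_comm bequiv.comma_unit by (rule bequiv.trans)

lemma cf_FTop: "cf D FTop"
proof -
  have "cf (Semi EmpA D) FTop" using cf.WSemi[of Hole EmpA FTop D] cf.topR by simp
  then show ?thesis by (rule cf.equiv) (rule bequiv.sym, rule bequiv.semi_unit)
qed

primrec ctx_comp :: "'a ctx \<Rightarrow> 'a ctx \<Rightarrow> 'a ctx" where
  "ctx_comp Hole C' = C'"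
| "ctx_comp (CommaL C B) C' = CommaL (ctx_comp C C') B"
| "ctx_comp (CommaR B C) C' = CommaR B (ctx_comp C C')"
| "ctx_comp (SemiL C B) C' = SemiL (ctx_comp C C') B"
| "ctx_comp (SemiR B C) C' = SemiR B (ctx_comp C C')"

lemma fill_ctx_comp: "fill (ctx_comp C C') D = fill C (fill C' D)"
  by (induction C) auto

definition ctx_le :: "'a rbunch \<Rightarrow> 'a rbunch \<Rightarrow> bool" where
  "ctx_le D D' \<longleftrightarrow> (\<forall>C \<chi>. cf (fill C D') \<chi> \<longrightarrow> cf (fill C D) \<chi>)"

lemma ctx_leI: "(\<And>C \<chi>. cf (fill C D') \<chi> \<Longrightarrow> cf (fill C D) \<chi>) \<Longrightarrow> ctx_le D D'"
  unfolding ctx_le_def by blast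

lemma ctx_le_cf: "ctx_le D D' \<Longrightarrow> cf D' \<chi> \<Longrightarrow> cf D \<chi>"
  unfolding ctx_le_def by (metis fill.simps(1))

lemma ctx_le_trans [trans]: "ctx_le D1 D2 \<Longrightarrow> ctx_le D2 D3 \<Longrightarrow> ctx_le D1 D3"
  unfolding ctx_le_def by blast

lemma ctx_le_if_bequiv: "bequiv D D' \<Longrightarrow> ctx_le D D'"
  by (rule ctx_leI) (erule cf.equiv, erule bequiv_fill)

lemma ctx_le_fill: "ctx_le D D' \<Longrightarrow> ctx_le (fill C D) (fill C D')"
  unfolding ctx_le_def by (metis fill_ctx_comp)

lemma ctx_le_FAnd_left: "ctx_le (Leaf (FAnd \<phi> \<psi>)) (Leaf \<phi>)"
  by (rule ctx_leI) (auto intro: cf.andL cf.WSemi)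

lemma ctx_le_FAnd_right: "ctx_le (Leaf (FAnd \<phi> \<psi>)) (Leaf \<psi>)"
proof -
  have "ctx_le (Leaf (FAnd \<phi> \<psi>)) (Semi (Leaf \<phi>) (Leaf \<psi>))"
    by (rule ctx_leI) (rule cf.andL)
  also have "ctx_le \<dots> (Semi (Leaf \<psi>) (Leaf \<phi>))"
    by (rule ctx_le_if_bequiv) (rule bequiv.semi_comm)
  also have "ctx_le \<dots> (Leaf \<psi>)"
    by (rule ctx_leI) (rule cf.WSemi)
  finally show ?thesis .
qed

lemma ctx_le_FImp:
  assumes "cf E \<phi>"
  shows "ctx_le (Semi (Leaf (FImp \<phi> \<psi>)) E) (Leaf \<psi>)"
proof -
  have "ctx_le (Semi (Leaf (FImp \<phi> \<psi>)) E) (Semi E (Leaf (FImp \<phi> \<psi>)))"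
    by (rule ctx_le_if_bequiv) (rule bequiv.semi_comm)
  also have "ctx_le \<dots> (Semi (Semi E EmpA) (Leaf (FImp \<phi> \<psi>)))"
    by (intro ctx_le_if_bequiv bequiv.semi_cong bequiv.sym[OF bequiv_Semi_EmpA] bequiv.refl)
  also have "ctx_le \<dots> (Semi EmpA (Leaf \<psi>))"
    by (rule ctx_leI) (rule cf.impL[OF assms])
  also have "ctx_le \<dots> (Leaf \<psi>)"
    by (rule ctx_le_if_bequiv) (rule bequiv.semi_unit)
  finally show ?thesis .
qed

lemma ctx_le_FWand:
  assumes "cf E \<phi>"
  shows "ctx_le (Comma (Leaf (FWand \<phi> \<psi>)) E) (Leaf \<psi>)"
proof -
  have "ctx_le (Comma (Leaf (FWand \<phi> \<psi>)) E) (Comma E (Leaf (FWand \<phi> \<psi>)))"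
    by (rule ctx_le_if_bequiv) (rule bequiv.comma_comm)
  also have "ctx_le \<dots> (Comma (Comma E EmpM) (Leaf (FWand \<phi> \<psi>)))"
    by (intro ctx_le_if_bequiv bequiv.comma_cong bequiv.sym[OF bequiv_Comma_EmpM] bequiv.refl)
  also have "ctx_le \<dots> (Comma EmpM (Leaf \<psi>))"
    by (rule ctx_leI) (rule cf.wandL[OF assms])
  also have "ctx_le \<dots> (Leaf \<psi>)"
    by (rule ctx_le_if_bequiv) (rule bequiv.comma_unit)
  finally show ?thesis .
qed

definition ctx_closed :: "'a bunch set \<Rightarrow> bool" where
  "ctx_closed X \<longleftrightarrow> (\<forall>D D'. ctx_le D D' \<longrightarrow> abs_bunch D' \<in> X \<longrightarrow> abs_bunch D \<in> X)"

lemma ctx_closedD: "ctx_closed X \<Longrightarrow> ctx_le D D' \<Longrightarrow> abs_bunch D' \<in> X \<Longrightarrow> abs_bunch D \<in> X"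
  unfolding ctx_closed_def by blast

lemma ctx_closed_out: "ctx_closed (out \<phi>)"
  unfolding ctx_closed_def abs_bunch_in_out_iff by (blast intro: ctx_le_cf)

lemma ctx_closed_Inter: "(\<And>X. X \<in> F \<Longrightarrow> ctx_closed X) \<Longrightarrow> ctx_closed (\<Inter>F)"
  unfolding ctx_closed_def by blast

lemma ctx_closed_Int: "ctx_closed X \<Longrightarrow> ctx_closed Y \<Longrightarrow> ctx_closed (X \<inter> Y)"
  unfolding ctx_closed_def by blast

lemma ctx_closed_cl: "ctx_closed (cl X)"
  unfolding cl_def by (rule ctx_closed_Inter) (auto intro: ctx_closed_out)

lemma ctx_closed_C_imp:
  assumes "ctx_closed Y"
  shows "ctx_closed (C_imp X Y)"
  unfolding ctx_closed_def C_imp_def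
proof (intro allI impI CollectI ballI)
  fix D D' x
  assume le: "ctx_le D D'" and "abs_bunch D' \<in> {D. \<forall>D'\<in>X. bsemi D D' \<in> Y}" and "x \<in> X"
  then have "bsemi (abs_bunch D') x \<in> Y" by blast
  moreover obtain E where E: "x = abs_bunch E" by (rule bunch_abs_cases)
  ultimately have "abs_bunch (Semi D' E) \<in> Y" by (simp add: bsemi.abs_eq)
  moreover have "ctx_le (Semi D E) (Semi D' E)"
    using ctx_le_fill[OF le, of "SemiL Hole E"] by simp
  ultimately show "bsemi (abs_bunch D) x \<in> Y"
    using ctx_closedD[OF assms] E by (simp add: bsemi.abs_eq)
qed

lemma ctx_closed_C_wand:
  assumes "ctx_closed Y"
  shows "ctx_closed (C_wand X Y)"
  unfolding ctx_closed_def C_wand_def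
proof (intro allI impI CollectI ballI)
  fix D D' x
  assume le: "ctx_le D D'" and "abs_bunch D' \<in> {D. \<forall>D'\<in>X. bcomma D D' \<in> Y}" and "x \<in> X"
  then have "bcomma (abs_bunch D') x \<in> Y" by blast
  moreover obtain E where E: "x = abs_bunch E" by (rule bunch_abs_cases)
  ultimately have "abs_bunch (Comma D' E) \<in> Y" by (simp add: bcomma.abs_eq)
  moreover have "ctx_le (Comma D E) (Comma D' E)"
    using ctx_le_fill[OF le, of "CommaL Hole E"] by simp
  ultimately show "bcomma (abs_bunch D) x \<in> Y"
    using ctx_closedD[OF assms] E by (simp add: bcomma.abs_eq)
qed

definition adequate :: "'a form \<Rightarrow> 'a bunch set \<Rightarrow> bool" where
  "adequate \<phi> X \<longleftrightarrow> bleaf \<phi> \<in> X \<and> X \<subseteq> out \<phi> \<and> ctx_closed X"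

lemma adequate_leaf_below:
  "adequate \<psi> X \<Longrightarrow> ctx_le D (Leaf \<psi>) \<Longrightarrow> abs_bunch D \<in> X"
  unfolding adequate_def bleaf.abs_eq using ctx_closedD[of X D "Leaf \<psi>"] by blast

lemma adequate_FAtom: "adequate (FAtom a) (out (FAtom a))"
  unfolding adequate_def
  by (simp add: bleaf.abs_eq abs_bunch_in_out_iff cf.ax ctx_closed_out)

lemma adequate_FTop: "adequate FTop C_top"
  by (simp add: adequate_def C_top_def ctx_closed_def subset_out_iff cf_FTop)

lemma adequate_FBot: "adequate FBot C_bot"
proof -
  have "cf (Leaf FBot) \<chi>" for \<chi> :: "'a form"
    using cf.botL[of Hole] by simp
  then show ?thesis
    unfolding adequate_def C_bot_def by (simp add: bleaf_in_cl_iff cl_subset_out ctx_closed_cl)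
qed

lemma adequate_FEmp: "adequate FEmp C_emp"
proof -
  have "{bempm} \<subseteq> out FEmp" by (simp add: bempm.abs_eq abs_bunch_in_out_iff cf.empR)
  moreover have "bleaf FEmp \<in> cl {bempm}"
    by (auto simp: bleaf_in_cl_iff bempm.abs_eq abs_bunch_in_out_iff
        intro: cf.empL[of Hole, simplified])
  ultimately show ?thesis
    unfolding adequate_def C_emp_def using cl_subset_out ctx_closed_cl by blast
qed

lemma adequate_FAnd:
  assumes X: "adequate \<phi> X" and Y: "adequate \<psi> Y"
  shows "adequate (FAnd \<phi> \<psi>) (C_and X Y)"
proof -
  have "bleaf (FAnd \<phi> \<psi>) \<in> X \<inter> Y"
    using adequate_leaf_below[OF X ctx_le_FAnd_left] adequate_leaf_below[OF Y ctx_le_FAnd_right]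
    by (simp add: bleaf.abs_eq)
  moreover have "X \<inter> Y \<subseteq> out (FAnd \<phi> \<psi>)"
    unfolding subset_out_iff
  proof (intro allI impI)
    fix D assume "abs_bunch D \<in> X \<inter> Y"
    then have "cf (Semi D D) (FAnd \<phi> \<psi>)"
      using X Y by (auto simp: adequate_def subset_out_iff intro: cf.andR)
    then show "cf D (FAnd \<phi> \<psi>)" using cf.CSemi[of Hole D] by simp
  qed
  ultimately show ?thesis
    using X Y by (simp add: adequate_def C_and_def ctx_closed_Int)
qed

lemma adequate_FOr:
  assumes X: "adequate \<phi> X" and Y: "adequate \<psi> Y"
  shows "adequate (FOr \<phi> \<psi>) (C_or X Y)"
proof -
  have "bleaf (FOr \<phi> \<psi>) \<in> cl (X \<union> Y)"
    unfolding bleaf_in_cl_iff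
  proof (intro allI impI)
    fix \<chi> assume "X \<union> Y \<subseteq> out \<chi>"
    then have "cf (Leaf \<phi>) \<chi>" "cf (Leaf \<psi>) \<chi>"
      using X Y by (auto simp: adequate_def bleaf.abs_eq abs_bunch_in_out_iff)
    then show "cf (Leaf (FOr \<phi> \<psi>)) \<chi>" using cf.orL[of Hole] by simp
  qed
  moreover have "X \<union> Y \<subseteq> out (FOr \<phi> \<psi>)"
    using X Y by (auto simp: adequate_def subset_out_iff intro: cf.orR1 cf.orR2)
  ultimately show ?thesis
    unfolding adequate_def C_or_def by (simp add: cl_subset_out ctx_closed_cl)
qed

lemma adequate_FStar:
  assumes X: "adequate \<phi> X" and Y: "adequate \<psi> Y"
  shows "adequate (FStar \<phi> \<psi>) (C_star X Y)"
proof -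
  let ?S = "{bcomma D D' | D D'. D \<in> X \<and> D' \<in> Y}"
  have "bleaf (FStar \<phi> \<psi>) \<in> cl ?S"
    unfolding bleaf_in_cl_iff
  proof (intro allI impI)
    fix \<chi> assume "?S \<subseteq> out \<chi>"
    moreover have "bcomma (bleaf \<phi>) (bleaf \<psi>) \<in> ?S" using X Y by (auto simp: adequate_def)
    ultimately have "bcomma (bleaf \<phi>) (bleaf \<psi>) \<in> out \<chi>" by (rule subsetD)
    then have "cf (Comma (Leaf \<phi>) (Leaf \<psi>)) \<chi>"
      by (simp add: bleaf.abs_eq bcomma.abs_eq abs_bunch_in_out_iff)
    then show "cf (Leaf (FStar \<phi> \<psi>)) \<chi>" using cf.starL[of Hole] by simp
  qed
  moreover have "?S \<subseteq> out (FStar \<phi> \<psi>)"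
  proof
    fix x assume "x \<in> ?S"
    then obtain y z where x: "x = bcomma y z" and "y \<in> X" "z \<in> Y" by blast
    moreover obtain D E where DE: "y = abs_bunch D" "z = abs_bunch E"
      by (meson bunch_abs_cases)
    ultimately have "cf D \<phi>" "cf E \<psi>"
      using X Y by (auto simp: adequate_def subset_out_iff)
    then have "cf (Comma D E) (FStar \<phi> \<psi>)" by (rule cf.starR)
    then show "x \<in> out (FStar \<phi> \<psi>)"
      by (simp add: x DE bcomma.abs_eq abs_bunch_in_out_iff)
  qed
  ultimately show ?thesis
    unfolding adequate_def C_star_def by (simp add: cl_subset_out ctx_closed_cl)
qed

lemma adequate_FImp:
  assumes X: "adequate \<phi> X" and Y: "adequate \<psi> Y"
  shows "adequate (FImp \<phi> \<psi>) (C_imp X Y)"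
proof -
  have "bleaf (FImp \<phi> \<psi>) \<in> C_imp X Y"
    unfolding C_imp_def
  proof (intro CollectI ballI)
    fix x assume "x \<in> X"
    moreover obtain E where E: "x = abs_bunch E" by (rule bunch_abs_cases)
    ultimately have "cf E \<phi>" using X by (simp add: adequate_def subset_out_iff)
    then show "bsemi (bleaf (FImp \<phi> \<psi>)) x \<in> Y"
      using adequate_leaf_below[OF Y ctx_le_FImp] E by (simp add: bleaf.abs_eq bsemi.abs_eq)
  qed
  moreover have "C_imp X Y \<subseteq> out (FImp \<phi> \<psi>)"
    unfolding subset_out_iff
  proof (intro allI impI)
    fix D assume "abs_bunch D \<in> C_imp X Y"
    then have "cf (Semi D (Leaf \<phi>)) \<psi>"
      using X Y by (auto simp: adequate_def C_imp_def subset_out_iff bleaf.abs_eq bsemi.abs_eq)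
    then show "cf D (FImp \<phi> \<psi>)" by (rule cf.impR)
  qed
  ultimately show ?thesis
    using Y ctx_closed_C_imp unfolding adequate_def by blast
qed

lemma adequate_FWand:
  assumes X: "adequate \<phi> X" and Y: "adequate \<psi> Y"
  shows "adequate (FWand \<phi> \<psi>) (C_wand X Y)"
proof -
  have "bleaf (FWand \<phi> \<psi>) \<in> C_wand X Y"
    unfolding C_wand_def
  proof (intro CollectI ballI)
    fix x assume "x \<in> X"
    moreover obtain E where E: "x = abs_bunch E" by (rule bunch_abs_cases)
    ultimately have "cf E \<phi>" using X by (simp add: adequate_def subset_out_iff)
    then show "bcomma (bleaf (FWand \<phi> \<psi>)) x \<in> Y"
      using adequate_leaf_below[OF Y ctx_le_FWand] E by (simp add: bleaf.abs_eq bcomma.abs_eq)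
  qed
  moreover have "C_wand X Y \<subseteq> out (FWand \<phi> \<psi>)"
    unfolding subset_out_iff
  proof (intro allI impI)
    fix D assume "abs_bunch D \<in> C_wand X Y"
    then have "cf (Comma D (Leaf \<phi>)) \<psi>"
      using X Y by (auto simp: adequate_def C_wand_def subset_out_iff bleaf.abs_eq bcomma.abs_eq)
    then show "cf D (FWand \<phi> \<psi>)" by (rule cf.wandR)
  qed
  ultimately show ?thesis
    using Y ctx_closed_C_wand unfolding adequate_def by blast
qed

lemma adequate_interp: "adequate \<phi> (interp \<phi>)"
  by (induction \<phi>)
    (simp_all add: adequate_FTop adequate_FBot adequate_FAnd adequate_FOr adequate_FImp
      adequate_FEmp adequate_FStar adequate_FWand adequate_FAtom)

theorem lemma6p6:
  fixes \<phi> :: "'a form"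
  shows "bleaf \<phi> \<in> interp \<phi> \<and> interp \<phi> \<subseteq> out \<phi>"
  using adequate_interp[of \<phi>] unfolding adequate_def by blast

end
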